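(* Let $X=(x_1,\ldots,x_n)$ and $Y=(y_1,\ldots,y_n)$ be two sequences of real numbers and let $p\in\{1,\dots,n\}$. Then for all $S\subseteq \{1,\dots,n\}$, $$|\mathrm{top}_p(X)-\mathrm{top}_p(Y)| \leq p\max_{i\in S} |x_i-y_i|+\sum_{i\in \{1,\dots,n\}\setminus S} |x_i-y_i|,$$ where $\mathrm{top}_p(Z)$ denotes the sum of the $p$ largest numbers in the sequence $Z$ (counted with multiplicity).
   Context: The maximum over an empty index set is interpreted as $0$. *)

theory Defs
  imports Complex_Main
begin

definition top_sum :: "nat \<Rightarrow> nat \<Rightarrow> (nat \<Rightarrow> real) \<Rightarrow> real" where
  "top_sum n p z = sum_list (take p (rev (sort (map z [1..<n+1]))))"

text \<open>Maximum over an index set, with the convention that the maximum over the empty set is 0.\<close>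
definition max0 :: "nat set \<Rightarrow> (nat \<Rightarrow> real) \<Rightarrow> real" where
  "max0 S f = (if S = {} then 0 else Max (f ` S))"

end

theory Submission
  imports Defs "HOL-Combinatorics.Permutations"
begin

text \<open>Sorting shows that top_sum n p z is the largest value of \<open>\<Sum>i\<in>T. z i\<close> over the
p-element subsets T of {1..n}. Taking T optimal for x and comparing with the same T
for y bounds top_sum n p x - top_sum n p y by \<open>\<Sum>i\<in>T. \<bar>x i - y i\<bar>\<close>; the at most p
indices of T inside S contribute at most p times the maximum over S, the others at most
the sum over the complement of S. Exchanging x and y gives the other inequality.\<close>

lemma antimono_on_sum_le_sum_lessThan:
  fixes h :: "nat \<Rightarrow> 'a::linordered_idom"
  assumes "antimono_on {..<n} h" and "J \<subseteq> {..<n}" and "card J = p"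
  shows "sum h J \<le> sum h {..<p}"
proof (cases "p = 0")
  case True
  with assms(2,3) show ?thesis by (simp add: finite_subset)
next
  case False
  define A where "A = {..<p}"
  define c where "c = h (p - 1)"
  have "finite J" using assms(2) finite_subset by blast
  have "p \<le> n" using assms(2,3) card_mono[of "{..<n}" J] by simp
  have "card (J - A) = card (A - J)"
    using \<open>finite J\<close> assms(3) by (simp add: card_Diff_subset_Int A_def Int_commute)
  have hJA: "h j \<le> c" if "j \<in> J - A" for j
    using that assms(1,2) unfolding c_def A_def by (intro monotone_onD[OF assms(1)]) auto
  have hAJ: "c \<le> h j" if "j \<in> A - J" for j
    using that False \<open>p \<le> n\<close> unfolding c_def A_def by (intro monotone_onD[OF assms(1)]) auto
  \<comment> \<open>Exchange argument: J - A and A - J have the same size and h is at most c on the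
      former, at least c on the latter.\<close>
  have "sum h (J - A) \<le> of_nat (card (J - A)) * c"
    using sum_mono[of "J - A" h "\<lambda>_. c"] hJA by simp
  also have "\<dots> = of_nat (card (A - J)) * c"
    using \<open>card (J - A) = card (A - J)\<close> by simp
  also have "\<dots> \<le> sum h (A - J)"
    using sum_mono[of "A - J" "\<lambda>_. c" h] hAJ by simp
  finally have "sum h (J - A) \<le> sum h (A - J)" .
  moreover have "sum h J = sum h (J \<inter> A) + sum h (J - A)"
    using \<open>finite J\<close> by (metis sum.Int_Diff)
  moreover have "sum h A = sum h (J \<inter> A) + sum h (A - J)"
    by (metis A_def finite_lessThan sum.Int_Diff Int_commute)
  ultimately show ?thesis by (simp add: A_def)
qed

lemma decreasing_enumeration:
  fixes z :: "nat \<Rightarrow> 'a::linorder"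
  obtains g where "bij_betw g {..<n} {1..n}"
    and "\<And>k. k < n \<Longrightarrow> rev (sort (map z [1..<n+1])) ! k = z (g k)"
proof -
  define L where "L = map z [1..<n+1]"
  have "length L = n" by (simp add: L_def)
  have "mset (rev (sort L)) = mset L" by simp
  then obtain \<pi> where \<pi>: "\<pi> permutes {..<length L}" "permute_list \<pi> L = rev (sort L)"
    using mset_eq_permutation by metis
  have "bij_betw (Suc \<circ> \<pi>) {..<n} {1..n}"
    using permutes_imp_bij[OF \<pi>(1)] unfolding \<open>length L = n\<close>
    by (rule bij_betw_trans) (simp add: bij_betw_def image_Suc_lessThan)
  moreover have "rev (sort L) ! k = z ((Suc \<circ> \<pi>) k)" if "k < n" for k
  proof -
    have "\<pi> k < n" using \<pi>(1) that \<open>length L = n\<close> permutes_in_image by fastforce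
    moreover have "rev (sort L) ! k = L ! \<pi> k"
      using permute_list_nth[OF \<pi>(1)] that \<pi>(2) \<open>length L = n\<close> by metis
    ultimately show ?thesis by (simp add: L_def del: upt_Suc)
  qed
  ultimately show thesis using that L_def by blast
qed

lemma top_sum_eq_sum_decreasing_enumeration:
  fixes z :: "nat \<Rightarrow> real"
  obtains g where "bij_betw g {..<n} {1..n}" and "antimono_on {..<n} (z \<circ> g)"
    and "\<And>p. p \<le> n \<Longrightarrow> top_sum n p z = (\<Sum>k<p. z (g k))"
proof -
  define s where "s = rev (sort (map z [1..<n+1]))"
  obtain g where g: "bij_betw g {..<n} {1..n}" and s: "\<And>k. k < n \<Longrightarrow> s ! k = z (g k)"
    using decreasing_enumeration unfolding s_def by blast
  have "length s = n" by (simp add: s_def)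
  have "antimono_on {..<n} (z \<circ> g)"
  proof (rule monotone_onI)
    fix i j assume "i \<in> {..<n}" "j \<in> {..<n}" "i \<le> j"
    then have "sort (map z [1..<n+1]) ! (n - Suc j) \<le> sort (map z [1..<n+1]) ! (n - Suc i)"
      by (intro sorted_nth_mono) auto
    then show "(z \<circ> g) j \<le> (z \<circ> g) i"
      using \<open>i \<in> {..<n}\<close> \<open>j \<in> {..<n}\<close> s by (simp add: s_def rev_nth)
  qed
  moreover have "top_sum n p z = (\<Sum>k<p. z (g k))" if "p \<le> n" for p
  proof -
    have "top_sum n p z = sum_list (take p s)" by (simp add: top_sum_def s_def)
    also have "\<dots> = (\<Sum>k<p. s ! k)"
      using \<open>length s = n\<close> that by (simp add: sum_list_sum_nth min_def atLeast0LessThan)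
    also have "\<dots> = (\<Sum>k<p. z (g k))" using that s by (intro sum.cong) auto
    finally show ?thesis .
  qed
  ultimately show thesis using that g by blast
qed

lemma top_sum_attained:
  fixes z :: "nat \<Rightarrow> real"
  assumes "p \<le> n"
  obtains T where "T \<subseteq> {1..n}" and "card T = p" and "top_sum n p z = sum z T"
proof -
  obtain g where g: "bij_betw g {..<n} {1..n}"
    and top: "top_sum n p z = (\<Sum>k<p. z (g k))"
    using top_sum_eq_sum_decreasing_enumeration assms by metis
  have "inj_on g {..<p}"
    using g assms inj_on_subset[of g "{..<n}" "{..<p}"] by (auto simp: bij_betw_def)
  moreover have "g ` {..<p} \<subseteq> {1..n}" using g assms by (auto simp: bij_betw_def)
  ultimately show thesis
    using that[of "g ` {..<p}"] top by (simp add: card_image sum.reindex)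
qed

lemma sum_le_top_sum:
  fixes z :: "nat \<Rightarrow> real"
  assumes "U \<subseteq> {1..n}" and "card U = p"
  shows "sum z U \<le> top_sum n p z"
proof -
  have "p \<le> n" using assms card_mono[of "{1..n}" U] by simp
  obtain g where g: "bij_betw g {..<n} {1..n}" and dec: "antimono_on {..<n} (z \<circ> g)"
    and top: "top_sum n p z = (\<Sum>k<p. z (g k))"
    using top_sum_eq_sum_decreasing_enumeration \<open>p \<le> n\<close> by metis
  define J where "J = {k \<in> {..<n}. g k \<in> U}"
  have "J \<subseteq> {..<n}" by (auto simp: J_def)
  have "U = g ` J" and "inj_on g J"
    using assms(1) g unfolding J_def bij_betw_def by (auto intro: inj_on_subset)
  then have "card J = p" and "sum z U = sum (z \<circ> g) J"
    using assms(2) by (simp_all add: card_image sum.reindex)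
  moreover have "sum (z \<circ> g) J \<le> sum (z \<circ> g) {..<p}"
    using antimono_on_sum_le_sum_lessThan[OF dec \<open>J \<subseteq> {..<n}\<close> \<open>card J = p\<close>] .
  ultimately show ?thesis using top by simp
qed

lemma top_sum_diff_le_sum_abs_diff:
  fixes x y :: "nat \<Rightarrow> real"
  assumes "p \<le> n"
  obtains T where "T \<subseteq> {1..n}" and "card T = p"
    and "top_sum n p x - top_sum n p y \<le> (\<Sum>i\<in>T. \<bar>x i - y i\<bar>)"
proof -
  obtain T where T: "T \<subseteq> {1..n}" "card T = p" "top_sum n p x = sum x T"
    using top_sum_attained assms by metis
  have "top_sum n p x - top_sum n p y \<le> sum x T - sum y T"
    using sum_le_top_sum[OF T(1,2), of y] T(3) by simp
  also have "\<dots> \<le> (\<Sum>i\<in>T. \<bar>x i - y i\<bar>)"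
    by (simp add: sum_subtractf[symmetric] sum_mono)
  finally show thesis using that T(1,2) by blast
qed

lemma le_max0:
  assumes "finite S" and "i \<in> S"
  shows "f i \<le> max0 S f"
  using assms by (auto simp: max0_def)

lemma max0_nonneg:
  assumes "finite S" and "\<And>i. 0 \<le> f i"
  shows "0 \<le> max0 S f"
proof (cases "S = {}")
  case False
  then obtain i where "i \<in> S" by blast
  then show ?thesis using assms le_max0[OF assms(1) \<open>i \<in> S\<close>] order_trans by blast
qed (simp add: max0_def)

lemma sum_le_card_max0_plus_sum_Diff:
  fixes d :: "nat \<Rightarrow> real"
  assumes "\<And>i. 0 \<le> d i" and "finite A" and "finite S" and "T \<subseteq> A" and "card T \<le> p"
  shows "sum d T \<le> real p * max0 S d + sum d (A - S)"
proof -
  have "finite T" using assms(2,4) finite_subset by blast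
  have "sum d (T \<inter> S) \<le> real (card (T \<inter> S)) * max0 S d"
    using sum_mono[of "T \<inter> S" d "\<lambda>_. max0 S d"] le_max0[OF assms(3)] by simp
  also have "\<dots> \<le> real p * max0 S d"
    using card_mono[OF \<open>finite T\<close>, of "T \<inter> S"] assms(5) max0_nonneg[OF assms(3,1)]
    by (intro mult_right_mono) auto
  finally have "sum d (T \<inter> S) \<le> real p * max0 S d" .
  moreover have "sum d (T - S) \<le> sum d (A - S)"
    using assms by (intro sum_mono2) auto
  moreover have "sum d T = sum d (T \<inter> S) + sum d (T - S)"
    using \<open>finite T\<close> by (metis sum.Int_Diff)
  ultimately show ?thesis by simp
qed

theorem lemma3p2:
  fixes x y :: "nat \<Rightarrow> real" and n p :: nat and S :: "nat set"
  assumes "p \<in> {1..n}"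
    and "S \<subseteq> {1..n}"
  shows "\<bar>top_sum n p x - top_sum n p y\<bar>
           \<le> real p * max0 S (\<lambda>i. \<bar>x i - y i\<bar>) + (\<Sum>i\<in>{1..n} - S. \<bar>x i - y i\<bar>)"
proof -
  let ?d = "\<lambda>i. \<bar>x i - y i\<bar>"
  have "p \<le> n" using assms(1) by simp
  have bound: "(\<Sum>i\<in>T. ?d i) \<le> real p * max0 S ?d + (\<Sum>i\<in>{1..n} - S. ?d i)"
    if "T \<subseteq> {1..n}" "card T = p" for T
    using that assms(2) finite_subset by (intro sum_le_card_max0_plus_sum_Diff) auto
  obtain T where "T \<subseteq> {1..n}" "card T = p"
    "top_sum n p x - top_sum n p y \<le> (\<Sum>i\<in>T. ?d i)"
    using top_sum_diff_le_sum_abs_diff \<open>p \<le> n\<close> by metis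
  moreover obtain T' where "T' \<subseteq> {1..n}" "card T' = p"
    "top_sum n p y - top_sum n p x \<le> (\<Sum>i\<in>T'. \<bar>y i - x i\<bar>)"
    using top_sum_diff_le_sum_abs_diff \<open>p \<le> n\<close> by metis
  ultimately show ?thesis
    using bound[of T] bound[of T'] by (simp add: abs_minus_commute abs_le_iff)
qed

end
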